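(* Let $(u_k)_{k\ge0}$ be generated by the IHT method with parameter $L>0$, and let $\sigma:=\min\big(b,\sqrt{2\beta/(L+\alpha)}\big)$. Then for every $k\ge1$ and every $p\in[1,\infty)$, $$\|u_{k+1}-u_k\|_{L^p(\Omega)}^p\ge\sigma^p\,\|\chi_k-\chi_{k+1}\|_{L^1(\Omega)}.$$
   Context: Let $\Omega\subset\mathbb R^n$ be a bounded open set with Lebesgue measure. Fix $\alpha\ge0$, $\beta>0$, $b\in(0,+\infty]$ and set $U_{ad}:=\{v\in L^2(\Omega): |v(x)|\le b\text{ a.e. in }\Omega\}$. For $t\in\mathbb R$ let $|t|_0:=0$ if $t=0$ and $|t|_0:=1$ if $t\ne0$; for measurable $u$ let $\|u\|_0:=\operatorname{meas}\{x\in\Omega:u(x)\ne0\}$. Define $g(u):=\frac\alpha2\|u\|_{L^2(\Omega)}^2+\beta\|u\|_0$. The function $f:L^2(\Omega)\to\mathbb R$ is weakly lower semicontinuous, bounded from below and Fréchet differentiable; $\nabla f(u)\in L^2(\Omega)$ is the Riesz representative of its derivative, and $\nabla f$ is Lipschitz continuous on $L^2(\Omega)$ with constant $L_f$. IHT method: given $L>0$ and $u_0\in U_{ad}$, for $k=0,1,\dots$ let $u_{k+1}$ be a global solution of $\min_{u\in U_{ad}} f(u_k)+\int_\Omega\nabla f(u_k)(u-u_k)\,dx+\frac L2\|u-u_k\|_{L^2(\Omega)}^2+g(u)$ (a solution exists). Let $\chi_k$ denote the characteristic function of $\{x\in\Omega:u_k(x)\ne0\}$. *)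

theory Defs
  imports "HOL-Analysis.Analysis"
begin

text \<open>Elements of L2(Omega) are represented by real functions on the ambient
Euclidean space that are Lebesgue measurable and square integrable on Omega
(w.r.t. Lebesgue measure restricted to Omega).\<close>

definition L2 :: "'a::euclidean_space set \<Rightarrow> ('a \<Rightarrow> real) \<Rightarrow> bool" where
  "L2 \<Omega> u \<longleftrightarrow> u \<in> borel_measurable (lebesgue_on \<Omega>) \<and>
     integrable (lebesgue_on \<Omega>) (\<lambda>x. (u x)\<^sup>2)"

definition L2norm :: "'a::euclidean_space set \<Rightarrow> ('a \<Rightarrow> real) \<Rightarrow> real" where
  "L2norm \<Omega> u = sqrt (integral\<^sup>L (lebesgue_on \<Omega>) (\<lambda>x. (u x)\<^sup>2))"

definition L2inner :: "'a::euclidean_space set \<Rightarrow> ('a \<Rightarrow> real) \<Rightarrow> ('a \<Rightarrow> real) \<Rightarrow> real" where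
  "L2inner \<Omega> u v = integral\<^sup>L (lebesgue_on \<Omega>) (\<lambda>x. u x * v x)"

definition L0 :: "'a::euclidean_space set \<Rightarrow> ('a \<Rightarrow> real) \<Rightarrow> real" where
  "L0 \<Omega> u = measure (lebesgue_on \<Omega>) {x\<in>\<Omega>. u x \<noteq> 0}"

text \<open>Admissible set; b in (0, +infinity] is an extended real.\<close>
definition Uad :: "'a::euclidean_space set \<Rightarrow> ereal \<Rightarrow> ('a \<Rightarrow> real) set" where
  "Uad \<Omega> b = {v. L2 \<Omega> v \<and> (AE x in lebesgue_on \<Omega>. ereal \<bar>v x\<bar> \<le> b)}"

definition gfun :: "'a::euclidean_space set \<Rightarrow> real \<Rightarrow> real \<Rightarrow> ('a \<Rightarrow> real) \<Rightarrow> real" where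
  "gfun \<Omega> \<alpha> \<beta> u = \<alpha> / 2 * (L2norm \<Omega> u)\<^sup>2 + \<beta> * L0 \<Omega> u"

definition IHT_model ::
  "'a::euclidean_space set \<Rightarrow> real \<Rightarrow> real \<Rightarrow> (('a \<Rightarrow> real) \<Rightarrow> real) \<Rightarrow>
   (('a \<Rightarrow> real) \<Rightarrow> ('a \<Rightarrow> real)) \<Rightarrow> real \<Rightarrow> ('a \<Rightarrow> real) \<Rightarrow> ('a \<Rightarrow> real) \<Rightarrow> real" where
  "IHT_model \<Omega> \<alpha> \<beta> f gradf L uk u =
     f uk + L2inner \<Omega> (gradf uk) (\<lambda>x. u x - uk x)
     + L / 2 * (L2norm \<Omega> (\<lambda>x. u x - uk x))\<^sup>2 + gfun \<Omega> \<alpha> \<beta> u"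

definition standing_f ::
  "'a::euclidean_space set \<Rightarrow> (('a \<Rightarrow> real) \<Rightarrow> real) \<Rightarrow>
   (('a \<Rightarrow> real) \<Rightarrow> ('a \<Rightarrow> real)) \<Rightarrow> real \<Rightarrow> bool" where
  "standing_f \<Omega> f gradf Lf \<longleftrightarrow>
     \<comment> \<open>well defined on equivalence classes\<close>
     (\<forall>u v. L2 \<Omega> u \<longrightarrow> L2 \<Omega> v \<longrightarrow> (AE x in lebesgue_on \<Omega>. u x = v x) \<longrightarrow>
        f u = f v \<and> (AE x in lebesgue_on \<Omega>. gradf u x = gradf v x)) \<and>
     \<comment> \<open>bounded from below\<close>
     (\<exists>c. \<forall>u. L2 \<Omega> u \<longrightarrow> c \<le> f u) \<and>
     \<comment> \<open>weakly lower semicontinuous\<close>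
     (\<forall>w w0. (\<forall>n. L2 \<Omega> (w n)) \<longrightarrow> L2 \<Omega> w0 \<longrightarrow>
        (\<forall>\<phi>. L2 \<Omega> \<phi> \<longrightarrow> (\<lambda>n. L2inner \<Omega> (w n) \<phi>) \<longlonglongrightarrow> L2inner \<Omega> w0 \<phi>) \<longrightarrow>
        ereal (f w0) \<le> liminf (\<lambda>n. ereal (f (w n)))) \<and>
     \<comment> \<open>Frechet differentiable with Riesz gradient in L2\<close>
     (\<forall>u. L2 \<Omega> u \<longrightarrow> L2 \<Omega> (gradf u) \<and>
        (\<forall>\<epsilon>>0. \<exists>\<delta>>0. \<forall>h. L2 \<Omega> h \<longrightarrow> L2norm \<Omega> h < \<delta> \<longrightarrow>
           \<bar>f (\<lambda>x. u x + h x) - f u - L2inner \<Omega> (gradf u) h\<bar> \<le> \<epsilon> * L2norm \<Omega> h)) \<and>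
     \<comment> \<open>Lipschitz gradient with constant Lf\<close>
     (\<forall>u v. L2 \<Omega> u \<longrightarrow> L2 \<Omega> v \<longrightarrow>
        L2norm \<Omega> (\<lambda>x. gradf u x - gradf v x) \<le> Lf * L2norm \<Omega> (\<lambda>x. u x - v x))"

definition IHT_seq ::
  "'a::euclidean_space set \<Rightarrow> ereal \<Rightarrow> real \<Rightarrow> real \<Rightarrow> (('a \<Rightarrow> real) \<Rightarrow> real) \<Rightarrow>
   (('a \<Rightarrow> real) \<Rightarrow> ('a \<Rightarrow> real)) \<Rightarrow> real \<Rightarrow> (nat \<Rightarrow> 'a \<Rightarrow> real) \<Rightarrow> bool" where
  "IHT_seq \<Omega> b \<alpha> \<beta> f gradf L u \<longleftrightarrow>
     u 0 \<in> Uad \<Omega> b \<and>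
     (\<forall>k. u (Suc k) \<in> Uad \<Omega> b \<and>
        (\<forall>v\<in>Uad \<Omega> b. IHT_model \<Omega> \<alpha> \<beta> f gradf L (u k) (u (Suc k))
                        \<le> IHT_model \<Omega> \<alpha> \<beta> f gradf L (u k) v))"

definition supp_chi :: "('a \<Rightarrow> real) \<Rightarrow> 'a \<Rightarrow> real" where
  "supp_chi u = indicator {x. u x \<noteq> 0}"

end

theory Submission imports Defs begin

text \<open>The IHT subproblem is an integral of the pointwise function
  \<open>t \<mapsto> (L+\<alpha>)/2 (t - q(x))\<^sup>2 + \<beta> |t|\<^sub>0\<close> (up to terms independent of \<open>t\<close>),
  so a global minimizer must minimize it almost everywhere. With
  \<open>\<sigma>\<^sup>2 \<le> 2\<beta>/(L+\<alpha>)\<close>, a nonzero value \<open>t\<close> with \<open>|t| < \<sigma>\<close> is never optimal: either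
  \<open>0\<close> is better, or \<open>q(x)\<close> lies beyond \<open>t\<close> and its clipping to \<open>[-\<sigma>,\<sigma>]\<close> is better.
  Hence every iterate \<open>u\<^sub>k\<close>, \<open>k \<ge> 1\<close>, satisfies \<open>|u\<^sub>k| \<ge> \<sigma>\<close> a.e. on its support,
  and where the supports of \<open>u\<^sub>k\<close> and \<open>u\<^sub>k\<^sub>+\<^sub>1\<close> differ,
  \<open>|u\<^sub>k\<^sub>+\<^sub>1 - u\<^sub>k| \<ge> \<sigma>\<close>.\<close>

lemma L2_mult_integrable:
  assumes "L2 \<Omega> u" "L2 \<Omega> v"
  shows "integrable (lebesgue_on \<Omega>) (\<lambda>x. u x * v x)"
proof -
  have i: "integrable (lebesgue_on \<Omega>) (\<lambda>x. (u x)\<^sup>2 + (v x)\<^sup>2)"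
    using assms unfolding L2_def by auto
  have m: "(\<lambda>x. u x * v x) \<in> borel_measurable (lebesgue_on \<Omega>)"
    using assms unfolding L2_def by auto
  have "norm (u x * v x) \<le> norm ((u x)\<^sup>2 + (v x)\<^sup>2)" for x
  proof -
    have "2 * (\<bar>u x\<bar> * \<bar>v x\<bar>) \<le> (u x)\<^sup>2 + (v x)\<^sup>2"
      using sum_squares_bound[of "\<bar>u x\<bar>" "\<bar>v x\<bar>"] by simp
    moreover have "0 \<le> \<bar>u x\<bar> * \<bar>v x\<bar>" by simp
    ultimately have "\<bar>u x\<bar> * \<bar>v x\<bar> \<le> (u x)\<^sup>2 + (v x)\<^sup>2" by linarith
    then show ?thesis by (simp add: abs_mult)
  qed
  then show ?thesis
    by (intro Bochner_Integration.integrable_bound[OF i m]) auto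
qed

lemma L2_diff:
  assumes "L2 \<Omega> u" "L2 \<Omega> v"
  shows "L2 \<Omega> (\<lambda>x. u x - v x)"
proof -
  have "integrable (lebesgue_on \<Omega>) (\<lambda>x. (u x)\<^sup>2 - 2 * (u x * v x) + (v x)\<^sup>2)"
    using assms L2_mult_integrable[OF assms] unfolding L2_def by auto
  moreover have "(\<lambda>x. (u x)\<^sup>2 - 2 * (u x * v x) + (v x)\<^sup>2) = (\<lambda>x. (u x - v x)\<^sup>2)"
    by (simp add: power2_diff algebra_simps)
  ultimately show ?thesis using assms unfolding L2_def by auto
qed

lemma Uad_patch:
  assumes fin: "\<Omega> \<in> lmeasurable" and w: "w \<in> Uad \<Omega> b"
    and v: "v \<in> borel_measurable (lebesgue_on \<Omega>)"
    and patch: "\<And>x. v x = w x \<or> \<bar>v x\<bar> \<le> s" and s: "ereal s \<le> b"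
  shows "v \<in> Uad \<Omega> b"
proof -
  let ?M = "lebesgue_on \<Omega>"
  interpret finite_measure ?M using fin by (rule finite_measure_lebesgue_on)
  have wL: "L2 \<Omega> w" and wb: "AE x in ?M. ereal \<bar>w x\<bar> \<le> b"
    using w unfolding Uad_def by auto
  have bound: "norm ((v x)\<^sup>2) \<le> norm ((w x)\<^sup>2 + s\<^sup>2)" for x
  proof (cases "v x = w x")
    case False
    then have "(v x)\<^sup>2 \<le> s\<^sup>2" using patch[of x] abs_le_square_iff[of "v x" s] by auto
    then show ?thesis by (simp add: add_increasing)
  qed simp
  have "integrable ?M (\<lambda>x. (w x)\<^sup>2 + s\<^sup>2)"
    using wL unfolding L2_def by auto
  moreover have "(\<lambda>x. (v x)\<^sup>2) \<in> borel_measurable ?M" using v by measurable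
  ultimately have "integrable ?M (\<lambda>x. (v x)\<^sup>2)"
    using bound by (rule Bochner_Integration.integrable_bound[OF _ _ AE_I2])
  moreover have "AE x in ?M. ereal \<bar>v x\<bar> \<le> b"
    using wb
  proof eventually_elim
    case (elim x)
    show ?case
    proof (cases "v x = w x")
      case False
      then have "ereal \<bar>v x\<bar> \<le> ereal s" using patch[of x] by simp
      then show ?thesis using s by (rule order.trans)
    qed (use elim in simp)
  qed
  ultimately show ?thesis using v unfolding Uad_def L2_def by auto
qed

lemma AE_eq_if_le_and_integral_ge:
  fixes f g :: "'a \<Rightarrow> real"
  assumes "integrable M f" "integrable M g"
    and "\<And>x. f x \<le> g x" and "(\<integral>x. g x \<partial>M) \<le> (\<integral>x. f x \<partial>M)"
  shows "AE x in M. f x = g x"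
proof -
  have int: "integrable M (\<lambda>x. g x - f x)"
    using assms(1,2) by (intro Bochner_Integration.integrable_diff)
  have nonneg: "AE x in M. 0 \<le> g x - f x" using assms(3) by simp
  have "(\<integral>x. g x - f x \<partial>M) \<le> 0" using assms(1,2,4) by simp
  moreover have "0 \<le> (\<integral>x. g x - f x \<partial>M)" using nonneg by (rule integral_nonneg_AE)
  ultimately have "(\<integral>x. g x - f x \<partial>M) = 0" by (rule antisym)
  then have "AE x in M. g x - f x = 0" using integral_nonneg_eq_0_iff_AE[OF int nonneg] by simp
  then show ?thesis by auto
qed

definition l0_descent :: "real \<Rightarrow> real \<Rightarrow> real \<Rightarrow> real \<Rightarrow> real \<Rightarrow> real" where
  "l0_descent c \<beta> s q t =
     (if c * q\<^sup>2 < c * (t - q)\<^sup>2 + \<beta> then 0 else max (- s) (min s q))"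

lemma l0_descent_abs_le: "0 \<le> s \<Longrightarrow> \<bar>l0_descent c \<beta> s q t\<bar> \<le> s"
  unfolding l0_descent_def by auto

lemma l0_descent_less:
  fixes c \<beta> s q t :: real
  assumes c: "c > 0" and s: "s\<^sup>2 \<le> \<beta> / c" and t: "0 < \<bar>t\<bar>" "\<bar>t\<bar> < s"
  defines "v \<equiv> l0_descent c \<beta> s q t"
  shows "c * (v - q)\<^sup>2 + \<beta> * (if v \<noteq> 0 then 1 else 0)
         < c * (t - q)\<^sup>2 + \<beta> * (if t \<noteq> 0 then 1 else 0)"
proof (cases "c * q\<^sup>2 < c * (t - q)\<^sup>2 + \<beta>")
  case True
  then show ?thesis using t unfolding v_def l0_descent_def by simp
next
  case False
  then have v: "v = max (- s) (min s q)" unfolding v_def l0_descent_def by simp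
  have "t\<^sup>2 < s\<^sup>2" using power_strict_mono[of "\<bar>t\<bar>" s 2] t by simp
  then have "c * t\<^sup>2 < c * s\<^sup>2" using c by simp
  also have "c * s\<^sup>2 \<le> \<beta>" using s c by (simp add: field_simps)
  finally have "c * t\<^sup>2 < c * (q\<^sup>2 - (t - q)\<^sup>2)" using False by (simp add: algebra_simps)
  then have tq: "t * t < t * q" using c by (simp add: power2_eq_square algebra_simps)
  \<comment> \<open>so \<open>q\<close> lies strictly beyond \<open>t\<close>, and clipping it to \<open>[-s, s]\<close> moves strictly towards \<open>q\<close>
      while staying nonzero\<close>
  have "(v - q)\<^sup>2 < (t - q)\<^sup>2 \<and> v \<noteq> 0"
  proof (cases "t > 0")
    case True
    then have "t < q" using tq by simp
    then have "t < v" "v \<le> q" using True t v by linarith+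
    then have "(q - v)\<^sup>2 < (q - t)\<^sup>2" by (intro power_strict_mono) auto
    then show ?thesis using \<open>t < v\<close> True by (simp add: power2_commute)
  next
    case False
    then have "t < 0" using t by simp
    then have "q < t" using tq by (simp add: mult_less_cancel_left)
    then have "v < t" "q \<le> v" using \<open>t < 0\<close> t v by linarith+
    then have "(v - q)\<^sup>2 < (t - q)\<^sup>2" by (intro power_strict_mono) auto
    then show ?thesis using \<open>v < t\<close> \<open>t < 0\<close> by simp
  qed
  then show ?thesis using c t by simp
qed

definition IHT_integrand :: "real \<Rightarrow> real \<Rightarrow> real \<Rightarrow> real \<Rightarrow> real \<Rightarrow> real \<Rightarrow> real" where
  "IHT_integrand \<alpha> \<beta> L g0 u0 t =
     g0 * (t - u0) + L / 2 * (t - u0)\<^sup>2 + \<alpha> / 2 * t\<^sup>2 + \<beta> * (if t \<noteq> 0 then 1 else 0)"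

lemma IHT_integrand_diff:
  fixes \<alpha> \<beta> L g0 u0 t1 t2 :: real
  assumes "L + \<alpha> > 0"
  defines "q \<equiv> (L * u0 - g0) / (L + \<alpha>)"
  shows "IHT_integrand \<alpha> \<beta> L g0 u0 t1 - IHT_integrand \<alpha> \<beta> L g0 u0 t2 =
    (L + \<alpha>) / 2 * (t1 - q)\<^sup>2 + \<beta> * (if t1 \<noteq> 0 then 1 else 0)
    - ((L + \<alpha>) / 2 * (t2 - q)\<^sup>2 + \<beta> * (if t2 \<noteq> 0 then 1 else 0))"
proof -
  have g0: "g0 = L * u0 - (L + \<alpha>) * q" using assms unfolding q_def by simp
  show ?thesis unfolding IHT_integrand_def g0 by (simp add: power2_eq_square field_simps)
qed

lemma IHT_integrand_descent:
  fixes \<alpha> \<beta> L g0 u0 s t :: real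
  assumes "\<alpha> \<ge> 0" "L > 0" "s\<^sup>2 \<le> 2 * \<beta> / (L + \<alpha>)" "0 < \<bar>t\<bar>" "\<bar>t\<bar> < s"
  defines "q \<equiv> (L * u0 - g0) / (L + \<alpha>)"
  defines "v \<equiv> l0_descent ((L + \<alpha>) / 2) \<beta> s q t"
  shows "IHT_integrand \<alpha> \<beta> L g0 u0 v < IHT_integrand \<alpha> \<beta> L g0 u0 t"
proof -
  have "s\<^sup>2 \<le> \<beta> / ((L + \<alpha>) / 2)" using assms(3) by (simp add: mult.commute)
  then have "(L + \<alpha>) / 2 * (v - q)\<^sup>2 + \<beta> * (if v \<noteq> 0 then 1 else 0)
      < (L + \<alpha>) / 2 * (t - q)\<^sup>2 + \<beta> * (if t \<noteq> 0 then 1 else 0)"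
    unfolding v_def using assms(1,2,4,5) by (intro l0_descent_less) auto
  moreover have "L + \<alpha> > 0" using assms(1,2) by simp
  ultimately show ?thesis using IHT_integrand_diff[of L \<alpha> \<beta> g0 u0 v t] unfolding q_def by linarith
qed

lemma IHT_model_integral:
  assumes fin: "\<Omega> \<in> lmeasurable" and u: "L2 \<Omega> u" and uk: "L2 \<Omega> uk" and g: "L2 \<Omega> (gradf uk)"
  shows "integrable (lebesgue_on \<Omega>) (\<lambda>x. IHT_integrand \<alpha> \<beta> L (gradf uk x) (uk x) (u x))"
    and "IHT_model \<Omega> \<alpha> \<beta> f gradf L uk u
           = f uk + (\<integral>x. IHT_integrand \<alpha> \<beta> L (gradf uk x) (uk x) (u x) \<partial>lebesgue_on \<Omega>)"
proof -
  let ?M = "lebesgue_on \<Omega>"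
  interpret finite_measure ?M using fin by (rule finite_measure_lebesgue_on)
  have d: "L2 \<Omega> (\<lambda>x. u x - uk x)" using L2_diff[OF u uk] .
  have i1: "integrable ?M (\<lambda>x. gradf uk x * (u x - uk x))"
    using L2_mult_integrable[OF g d] .
  have i2: "integrable ?M (\<lambda>x. (u x - uk x)\<^sup>2)" and i3: "integrable ?M (\<lambda>x. (u x)\<^sup>2)"
    using d u unfolding L2_def by auto
  have [measurable]: "u \<in> borel_measurable ?M" using u unfolding L2_def by auto
  have i4: "integrable ?M (\<lambda>x. if u x \<noteq> 0 then 1 else 0 :: real)"
    by (rule integrable_const_bound[where B=1]) auto
  show "integrable ?M (\<lambda>x. IHT_integrand \<alpha> \<beta> L (gradf uk x) (uk x) (u x))"
    unfolding IHT_integrand_def using i1 i2 i3 i4 by auto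
  have "L0 \<Omega> u = (\<integral>x. indicator {x\<in>\<Omega>. u x \<noteq> 0} x \<partial>?M)"
    unfolding L0_def by (simp add: Int_absorb2 subset_iff)
  also have "\<dots> = (\<integral>x. (if u x \<noteq> 0 then 1 else 0) \<partial>?M)"
    by (rule Bochner_Integration.integral_cong) (auto simp: indicator_def)
  finally have "L0 \<Omega> u = (\<integral>x. (if u x \<noteq> 0 then 1 else 0) \<partial>?M)" .
  moreover have "(L2norm \<Omega> (\<lambda>x. u x - uk x))\<^sup>2 = (\<integral>x. (u x - uk x)\<^sup>2 \<partial>?M)"
    and "(L2norm \<Omega> u)\<^sup>2 = (\<integral>x. (u x)\<^sup>2 \<partial>?M)"
    unfolding L2norm_def by (simp_all add: integral_nonneg_AE)
  ultimately show "IHT_model \<Omega> \<alpha> \<beta> f gradf L uk u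
      = f uk + (\<integral>x. IHT_integrand \<alpha> \<beta> L (gradf uk x) (uk x) (u x) \<partial>?M)"
    unfolding IHT_model_def gfun_def L2inner_def IHT_integrand_def using i1 i2 i3 i4 by simp
qed

lemma IHT_minimizer_no_small_values:
  assumes fin: "\<Omega> \<in> lmeasurable" and uk: "L2 \<Omega> uk" and g: "L2 \<Omega> (gradf uk)"
    and w: "w \<in> Uad \<Omega> b"
    and min: "\<forall>v\<in>Uad \<Omega> b. IHT_model \<Omega> \<alpha> \<beta> f gradf L uk w \<le> IHT_model \<Omega> \<alpha> \<beta> f gradf L uk v"
    and "\<alpha> \<ge> 0" "L > 0" "0 \<le> s" "s\<^sup>2 \<le> 2 * \<beta> / (L + \<alpha>)" "ereal s \<le> b"
  shows "AE x in lebesgue_on \<Omega>. w x \<noteq> 0 \<longrightarrow> s \<le> \<bar>w x\<bar>"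
proof -
  let ?M = "lebesgue_on \<Omega>"
  let ?P = "\<lambda>u x. IHT_integrand \<alpha> \<beta> L (gradf uk x) (uk x) (u x)"
  define v where "v x = (if 0 < \<bar>w x\<bar> \<and> \<bar>w x\<bar> < s
    then l0_descent ((L + \<alpha>) / 2) \<beta> s ((L * uk x - gradf uk x) / (L + \<alpha>)) (w x) else w x)" for x
  have wL: "L2 \<Omega> w" using w unfolding Uad_def by auto
  have [measurable]: "w \<in> borel_measurable ?M" "uk \<in> borel_measurable ?M"
    "gradf uk \<in> borel_measurable ?M"
    using wL uk g unfolding L2_def by auto
  have "v \<in> borel_measurable ?M" unfolding v_def l0_descent_def by measurable
  then have v: "v \<in> Uad \<Omega> b"
    using assms(8,10) l0_descent_abs_le by (intro Uad_patch[OF fin w]) (auto simp: v_def)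
  then have vL: "L2 \<Omega> v" unfolding Uad_def by auto
  have descent: "?P v x \<le> ?P w x \<and> (0 < \<bar>w x\<bar> \<and> \<bar>w x\<bar> < s \<longrightarrow> ?P v x < ?P w x)" for x
    unfolding v_def using IHT_integrand_descent[OF assms(6,7,9), of "w x"]
    by (auto intro: less_imp_le)
  have "(\<integral>x. ?P w x \<partial>?M) \<le> (\<integral>x. ?P v x \<partial>?M)"
    using min v IHT_model_integral(2)[where gradf=gradf, OF fin wL uk g]
      IHT_model_integral(2)[where gradf=gradf, OF fin vL uk g]
    by fastforce
  then have "AE x in ?M. ?P v x = ?P w x"
    using descent IHT_model_integral(1)[where gradf=gradf, OF fin _ uk g] wL vL
    by (intro AE_eq_if_le_and_integral_ge) auto
  then show ?thesis by (rule eventually_mono) (use descent in fastforce)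
qed

lemma nn_integral_powr_diff_ge_supp_chi:
  fixes v w :: "'a \<Rightarrow> real"
  assumes [measurable]: "v \<in> borel_measurable M" "w \<in> borel_measurable M"
    and v: "AE x in M. v x \<noteq> 0 \<longrightarrow> s \<le> \<bar>v x\<bar>" and w: "AE x in M. w x \<noteq> 0 \<longrightarrow> s \<le> \<bar>w x\<bar>"
    and "0 \<le> s" "0 \<le> p"
  shows "ennreal (s powr p) * (\<integral>\<^sup>+ x. ennreal \<bar>supp_chi v x - supp_chi w x\<bar> \<partial>M)
         \<le> (\<integral>\<^sup>+ x. ennreal (\<bar>w x - v x\<bar> powr p) \<partial>M)"
proof -
  have "(\<lambda>x. ennreal \<bar>supp_chi v x - supp_chi w x\<bar>) \<in> borel_measurable M"
    unfolding supp_chi_def by measurable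
  then have "ennreal (s powr p) * (\<integral>\<^sup>+ x. ennreal \<bar>supp_chi v x - supp_chi w x\<bar> \<partial>M)
      = (\<integral>\<^sup>+ x. ennreal (s powr p * \<bar>supp_chi v x - supp_chi w x\<bar>) \<partial>M)"
    by (simp add: nn_integral_cmult[symmetric] ennreal_mult)
  also have "\<dots> \<le> (\<integral>\<^sup>+ x. ennreal (\<bar>w x - v x\<bar> powr p) \<partial>M)"
  proof (rule nn_integral_mono_AE)
    have "AE x in M. s powr p * \<bar>supp_chi v x - supp_chi w x\<bar> \<le> \<bar>w x - v x\<bar> powr p"
      using v w
    proof eventually_elim
      case (elim x)
      show ?case
      proof (cases "(v x = 0) = (w x = 0)")
        case False
        then have "s \<le> \<bar>w x - v x\<bar>" using elim by auto
        then have "s powr p \<le> \<bar>w x - v x\<bar> powr p" using assms(5,6) by (intro powr_mono2) auto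
        then show ?thesis using False by (auto simp: supp_chi_def indicator_def)
      qed (simp add: supp_chi_def indicator_def)
    qed
    then show "AE x in M. ennreal (s powr p * \<bar>supp_chi v x - supp_chi w x\<bar>)
        \<le> ennreal (\<bar>w x - v x\<bar> powr p)"
      by (rule eventually_mono) (rule ennreal_leI)
  qed
  finally show ?thesis .
qed

lemma IHT_seq_no_small_values:
  assumes fin: "\<Omega> \<in> lmeasurable" and f: "standing_f \<Omega> f gradf Lf"
    and seq: "IHT_seq \<Omega> b \<alpha> \<beta> f gradf L u"
    and "\<alpha> \<ge> 0" "L > 0" "0 \<le> s" "s\<^sup>2 \<le> 2 * \<beta> / (L + \<alpha>)" "ereal s \<le> b"
  shows "AE x in lebesgue_on \<Omega>. u (Suc k) x \<noteq> 0 \<longrightarrow> s \<le> \<bar>u (Suc k) x\<bar>"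
proof -
  have "u i \<in> Uad \<Omega> b" for i using seq unfolding IHT_seq_def by (cases i) auto
  then have "L2 \<Omega> (u k)" "L2 \<Omega> (gradf (u k))"
    using f unfolding Uad_def standing_f_def by auto
  then show ?thesis
    using seq assms(4-) unfolding IHT_seq_def
    by (intro IHT_minimizer_no_small_values[where f=f and gradf=gradf, OF fin]) auto
qed

lemma real_of_ereal_min_ereal:
  fixes b :: ereal and r :: real
  assumes "b > 0" "0 \<le> r"
  defines "\<sigma> \<equiv> real_of_ereal (min b (ereal r))"
  shows "0 \<le> \<sigma>" "\<sigma> \<le> r" "ereal \<sigma> \<le> b"
  using assms by (cases b; auto simp: min_def)+

theorem mainTheorem7:
  fixes \<Omega> :: "'a::euclidean_space set"
    and b :: ereal and \<alpha> \<beta> L Lf p :: real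
    and f :: "('a \<Rightarrow> real) \<Rightarrow> real" and gradf :: "('a \<Rightarrow> real) \<Rightarrow> ('a \<Rightarrow> real)"
    and u :: "nat \<Rightarrow> 'a \<Rightarrow> real" and k :: nat
  assumes "open \<Omega>" and "bounded \<Omega>"
    and "\<alpha> \<ge> 0" and "\<beta> > 0" and "b > 0"
    and "standing_f \<Omega> f gradf Lf"
    and "L > 0"
    and "IHT_seq \<Omega> b \<alpha> \<beta> f gradf L u"
    and "k \<ge> 1" and "p \<ge> 1"
  shows "(\<integral>\<^sup>+ x. ennreal (\<bar>u (Suc k) x - u k x\<bar> powr p) \<partial>lebesgue_on \<Omega>)
         \<ge> ennreal ((real_of_ereal (min b (ereal (sqrt (2 * \<beta> / (L + \<alpha>)))))) powr p)
           * (\<integral>\<^sup>+ x. ennreal \<bar>supp_chi (u k) x - supp_chi (u (Suc k)) x\<bar> \<partial>lebesgue_on \<Omega>)"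
proof -
  define r where "r = sqrt (2 * \<beta> / (L + \<alpha>))"
  define \<sigma> where "\<sigma> = real_of_ereal (min b (ereal r))"
  have fin: "\<Omega> \<in> lmeasurable" using assms(1,2) by (simp add: lmeasurable_open)
  have "0 \<le> r" "r\<^sup>2 = 2 * \<beta> / (L + \<alpha>)" using assms(3,4,7) unfolding r_def by auto
  then have \<sigma>: "0 \<le> \<sigma>" "\<sigma>\<^sup>2 \<le> 2 * \<beta> / (L + \<alpha>)" "ereal \<sigma> \<le> b"
    using real_of_ereal_min_ereal[OF assms(5), of r] power_mono[of \<sigma> r 2] unfolding \<sigma>_def by auto
  have gap: "AE x in lebesgue_on \<Omega>. u (Suc i) x \<noteq> 0 \<longrightarrow> \<sigma> \<le> \<bar>u (Suc i) x\<bar>" for i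
    by (rule IHT_seq_no_small_values[OF fin assms(6,8,3,7) \<sigma>])
  obtain j where k: "k = Suc j" using assms(9) by (cases k) auto
  have "u i \<in> borel_measurable (lebesgue_on \<Omega>)" for i
    using assms(8) unfolding IHT_seq_def Uad_def L2_def by (cases i) auto
  then show ?thesis
    using nn_integral_powr_diff_ge_supp_chi[OF _ _ gap[of j, folded k] gap[of k] \<sigma>(1)] assms(10)
    unfolding \<sigma>_def r_def by auto
qed

end
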